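(* For each quantile level $\alpha$, let $q_t^{\alpha}=b_t^{\alpha}+\theta_t^{\alpha}$ be the Quantile Tracker iterate obtained via $\theta_{t+1}^{\alpha}=\theta_t^{\alpha}-\eta(\mathbb{1}\{y_t\le q_t^{\alpha}\}-\alpha)$ from any initial offset $\theta_1^{\alpha}$ and learning rate $\eta>0$, and let $[\hat q_t^{\alpha_1},\dots,\hat q_t^{\alpha_{|\mathcal{A}|}}]=m([q_t^{\alpha_1},\dots,q_t^{\alpha_{|\mathcal{A}|}}])$, where $m:\mathbb{R}^{|\mathcal{A}|}\to\mathbb{R}^{|\mathcal{A}|}$ produces a vector with nondecreasing entries. For both $m=\textsc{Sort}$ and $m=\Pi_{\mathcal{K}}$, there exist a set of levels $\mathcal{A}$ and a sequence $(y_t,b_t)$ with $|y_t-b_t^{\alpha}|<R$ for all $\alpha,t$ (for some $R>0$) such that for some $\alpha\in\mathcal{A}$, $\lim_{T\to\infty}\frac1T\sum_{t=1}^T\mathbb{1}\{y_t\le\hat q_t^{\alpha}\}\ne\alpha$.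
   Context: $\mathcal{A}=\{\alpha_1<\dots<\alpha_{|\mathcal{A}|}\}\subset(0,1)$ is a set of quantile levels; base forecasts $b_t\in\mathcal{K}$ where $\mathcal{K}=\{x\in\mathbb{R}^{|\mathcal{A}|}:x_1\le\dots\le x_{|\mathcal{A}|}\}$. $\textsc{Sort}(v)$ is the vector whose $i$-th entry is the $i$-th smallest entry of $v$; $\Pi_{\mathcal{K}}$ is Euclidean projection onto $\mathcal{K}$ (isotonic regression). *)

theory Defs
  imports "HOL-Analysis.Analysis"
begin

text \<open>Vectors in R^{|A|} are represented as real lists of length |A|; the i-th entry
  corresponds to the i-th smallest level alphas ! i.  Time is 0-indexed internally:
  index t here corresponds to time t+1 of the paper.\<close>

definition mono_cone :: "nat \<Rightarrow> real list set" where
  "mono_cone n = {x. length x = n \<and> sorted x}"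

definition sq_dist :: "real list \<Rightarrow> real list \<Rightarrow> real" where
  "sq_dist x z = (\<Sum>i<length x. (x ! i - z ! i)^2)"

definition sort_vec :: "real list \<Rightarrow> real list" where
  "sort_vec v = sort v"

definition iso_proj :: "real list \<Rightarrow> real list" where
  "iso_proj v = (THE z. z \<in> mono_cone (length v) \<and>
                   (\<forall>w \<in> mono_cone (length v). sq_dist v z \<le> sq_dist v w))"

fun qt_offset :: "real list \<Rightarrow> real \<Rightarrow> (real \<Rightarrow> real) \<Rightarrow> (nat \<Rightarrow> real) \<Rightarrow> (nat \<Rightarrow> real list)
                   \<Rightarrow> nat \<Rightarrow> real list" where
  "qt_offset alphas eta th1 y b 0 = map th1 alphas"
| "qt_offset alphas eta th1 y b (Suc t) =
     (let th = qt_offset alphas eta th1 y b t in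
      map (\<lambda>i. th ! i - eta * ((if y t \<le> b t ! i + th ! i then 1 else 0) - alphas ! i))
          [0..<length alphas])"

definition qt_iter :: "real list \<Rightarrow> real \<Rightarrow> (real \<Rightarrow> real) \<Rightarrow> (nat \<Rightarrow> real) \<Rightarrow> (nat \<Rightarrow> real list)
                   \<Rightarrow> nat \<Rightarrow> real list" where
  "qt_iter alphas eta th1 y b t =
     map (\<lambda>i. b t ! i + qt_offset alphas eta th1 y b t ! i) [0..<length alphas]"

definition qt_post :: "(real list \<Rightarrow> real list) \<Rightarrow> real list \<Rightarrow> real \<Rightarrow> (real \<Rightarrow> real)
                   \<Rightarrow> (nat \<Rightarrow> real) \<Rightarrow> (nat \<Rightarrow> real list) \<Rightarrow> nat \<Rightarrow> real list" where
  "qt_post m alphas eta th1 y b t = m (qt_iter alphas eta th1 y b t)"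

end

theory Submission
  imports Defs
begin

text \<open>Take the levels 1/4 and 3/4 and y_t = 0, and choose the base forecasts adaptively so that
  at every step exactly one raw iterate equals 0 and the other is negative.  Then exactly one
  level is covered, so the sum S of the two offsets never changes, while the offset of level 1/4
  is pushed towards S/2; this keeps the base forecasts bounded.  For both Sort and isotonic projection the lower post-processed entry of a pair is
  at most the mean of the pair, which is negative; hence level 1/4 is never covered and its
  empirical coverage is identically 0.\<close>

lemma sq_dist_pos:
  assumes "length w = length v" and "w \<noteq> v"
  shows "0 < sq_dist v w"
proof -
  obtain i where "i < length v" and "v ! i \<noteq> w ! i"
    using assms nth_equalityI by metis
  then show ?thesis
    unfolding sq_dist_def by (intro sum_pos2[of _ i]) auto
qed

lemma iso_proj_eqI:
  assumes "z \<in> mono_cone (length v)"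
    and "\<And>w. w \<in> mono_cone (length v) \<Longrightarrow> w \<noteq> z \<Longrightarrow> sq_dist v z < sq_dist v w"
  shows "iso_proj v = z"
  unfolding iso_proj_def
  by (rule the_equality) (use assms in \<open>fastforce, force\<close>)

lemma iso_proj_sorted:
  assumes "sorted v"
  shows "iso_proj v = v"
proof (rule iso_proj_eqI)
  show "v \<in> mono_cone (length v)"
    using assms by (simp add: mono_cone_def)
  fix w assume "w \<in> mono_cone (length v)" and "w \<noteq> v"
  then show "sq_dist v v < sq_dist v w"
    by (simp add: sq_dist_def mono_cone_def sq_dist_pos[unfolded sq_dist_def])
qed

lemma sq_dist_pair: "sq_dist [p, q] [w1, w2] = (p - w1)^2 + (q - w2)^2"
  by (simp add: sq_dist_def numeral_2_eq_2 lessThan_Suc)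

lemma iso_proj_pair_unsorted:
  fixes p q :: real
  assumes "q < p"
  shows "iso_proj [p, q] = [(p + q) / 2, (p + q) / 2]"
proof (rule iso_proj_eqI)
  let ?m = "(p + q) / 2"
  show "[?m, ?m] \<in> mono_cone (length [p, q])"
    by (simp add: mono_cone_def)
  fix w assume w: "w \<in> mono_cone (length [p, q])" and "w \<noteq> [?m, ?m]"
  then obtain w1 w2 where w_eq: "w = [w1, w2]" and "w1 \<le> w2"
    by (auto simp: mono_cone_def numeral_2_eq_2 length_Suc_conv)
  have "(?m - w1)^2 + (?m - w2)^2 > 0"
    using \<open>w \<noteq> [?m, ?m]\<close> w_eq by (auto simp: sum_power2_gt_zero_iff)
  moreover have "(p - q) * (w2 - w1) \<ge> 0"
    using assms \<open>w1 \<le> w2\<close> by simp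
  moreover have "(p - w1)^2 + (q - w2)^2 =
      (p - ?m)^2 + (q - ?m)^2 + (?m - w1)^2 + (?m - w2)^2 + (p - q) * (w2 - w1)"
    by (simp add: power2_eq_square field_simps)
  ultimately show "sq_dist [p, q] [?m, ?m] < sq_dist [p, q] w"
    by (simp add: w_eq sq_dist_pair)
qed

lemma pair_post_first_le_mean:
  fixes p q :: real
  assumes "m \<in> {sort_vec, iso_proj}"
  shows "m [p, q] ! 0 \<le> (p + q) / 2"
  using assms
  by (cases "p \<le> q") (auto simp: sort_vec_def iso_proj_sorted iso_proj_pair_unsorted)

text \<open>lower_offset is the offset of level 1/4 when the tracker runs on adversarial_base with
  S the sum of the initial offsets; that of level 3/4 is then S minus it.\<close>

fun lower_offset :: "real \<Rightarrow> real \<Rightarrow> real \<Rightarrow> nat \<Rightarrow> real" where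
  "lower_offset eta S x0 0 = x0"
| "lower_offset eta S x0 (Suc t) =
     (let x = lower_offset eta S x0 t in if S - x < x then x - 3 * eta / 4 else x + eta / 4)"

definition adversarial_base :: "real \<Rightarrow> real \<Rightarrow> real \<Rightarrow> nat \<Rightarrow> real list" where
  "adversarial_base eta S x0 t =
     (let x = lower_offset eta S x0 t in if S - x < x then [- x, - x] else [x - S - 1, x - S])"

lemma lower_offset_bounds:
  assumes "eta > 0"
  shows "min x0 (S / 2 - eta) \<le> lower_offset eta S x0 t \<and> lower_offset eta S x0 t \<le> max x0 (S / 2 + eta)"
  using assms by (induction t) (auto simp: Let_def)

lemma qt_offset_adversarial:
  fixes th1 :: "real \<Rightarrow> real"
  defines "S \<equiv> th1 (1/4) + th1 (3/4)"
  shows "qt_offset [1/4, 3/4] eta th1 (\<lambda>_. 0) (adversarial_base eta S (th1 (1/4))) t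
    = (let x = lower_offset eta S (th1 (1/4)) t in [x, S - x])"
proof (induction t)
  case (Suc t)
  then show ?case
    by (simp add: Let_def adversarial_base_def upt_conv_Cons numeral_2_eq_2)
qed (simp add: S_def)

lemma qt_iter_adversarial:
  fixes th1 :: "real \<Rightarrow> real"
  defines "S \<equiv> th1 (1/4) + th1 (3/4)"
  shows "qt_iter [1/4, 3/4] eta th1 (\<lambda>_. 0) (adversarial_base eta S (th1 (1/4))) t
    = (let x = lower_offset eta S (th1 (1/4)) t in
       if S - x < x then [0, S - 2 * x] else [2 * x - S - 1, 0])"
  by (simp add: S_def qt_iter_def qt_offset_adversarial adversarial_base_def Let_def
      upt_conv_Cons numeral_2_eq_2)

lemma adversarial_base_mono:
  "adversarial_base eta S x0 t \<in> mono_cone 2"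
  by (simp add: adversarial_base_def Let_def mono_cone_def)

lemma adversarial_base_bounded:
  assumes "eta > 0" and "i < 2"
  shows "\<bar>adversarial_base eta S x0 t ! i\<bar> \<le> \<bar>x0\<bar> + 2 * \<bar>S\<bar> + eta + 1"
proof -
  have "\<bar>lower_offset eta S x0 t\<bar> \<le> \<bar>x0\<bar> + \<bar>S\<bar> + eta"
    using lower_offset_bounds[OF \<open>eta > 0\<close>, of x0 S t] \<open>eta > 0\<close>
    by (simp add: min_def max_def split: if_splits; linarith)
  then show ?thesis
    using \<open>i < 2\<close> \<open>eta > 0\<close>
    by (auto simp: adversarial_base_def Let_def less_2_cases_iff)
qed

lemma qt_post_adversarial_neg:
  fixes th1 :: "real \<Rightarrow> real"
  assumes "m \<in> {sort_vec, iso_proj}"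
  defines "S \<equiv> th1 (1/4) + th1 (3/4)"
  shows "qt_post m [1/4, 3/4] eta th1 (\<lambda>_. 0) (adversarial_base eta S (th1 (1/4))) t ! 0 < 0"
proof -
  define x where "x = lower_offset eta S (th1 (1/4)) t"
  have "qt_iter [1/4, 3/4] eta th1 (\<lambda>_. 0) (adversarial_base eta S (th1 (1/4))) t
      = (if S - x < x then [0, S - 2 * x] else [2 * x - S - 1, 0])"
    using qt_iter_adversarial unfolding S_def x_def Let_def .
  then obtain p q where "qt_iter [1/4, 3/4] eta th1 (\<lambda>_. 0) (adversarial_base eta S (th1 (1/4))) t
      = [p, q]" and "p + q < 0"
    by (cases "S - x < x") auto
  then show ?thesis
    using pair_post_first_le_mean[OF assms(1), of p q] by (simp add: qt_post_def)
qed

theorem proposition2: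
  shows "\<forall>m \<in> {sort_vec, iso_proj}. \<forall>eta::real. eta > 0 \<longrightarrow> (\<forall>th1 :: real \<Rightarrow> real.
     \<exists>(alphas :: real list) (y :: nat \<Rightarrow> real) (b :: nat \<Rightarrow> real list) (R :: real).
       sorted_wrt (<) alphas \<and> (\<forall>a \<in> set alphas. 0 < a \<and> a < 1) \<and>
       (\<forall>t. b t \<in> mono_cone (length alphas)) \<and>
       R > 0 \<and> (\<forall>t. \<forall>i < length alphas. \<bar>y t - b t ! i\<bar> < R) \<and>
       (\<exists>i < length alphas.
          \<not> ((\<lambda>T. (\<Sum>t<T. if y t \<le> qt_post m alphas eta th1 y b t ! i then 1 else 0) / real T)
               \<longlonglongrightarrow> alphas ! i)))"
proof (intro ballI allI impI)
  fix m and eta :: real and th1 :: "real \<Rightarrow> real"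
  assume m: "m \<in> {sort_vec, iso_proj}" and "eta > 0"
  define S where "S = th1 (1/4) + th1 (3/4)"
  define b where "b = adversarial_base eta S (th1 (1/4))"
  define R where "R = \<bar>th1 (1/4)\<bar> + 2 * \<bar>S\<bar> + eta + 2"
  have bounded: "\<bar>0 - b t ! i\<bar> < R" if "i < 2" for t i
    using adversarial_base_bounded[OF \<open>eta > 0\<close> that, of S "th1 (1/4)" t]
    unfolding b_def R_def by linarith
  have never_covered: "\<not> 0 \<le> qt_post m [1/4, 3/4] eta th1 (\<lambda>_. 0) b t ! 0" for t
    using qt_post_adversarial_neg[OF m, of eta th1 t] unfolding b_def S_def by linarith
  have coverage_zero: "(\<lambda>T. (\<Sum>t<T. if 0 \<le> qt_post m [1/4, 3/4] eta th1 (\<lambda>_. 0) b t ! 0 then 1 else 0)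
      / real T) = (\<lambda>_. 0)"
    using never_covered by simp
  have not_tendsto: "\<not> ((\<lambda>_. 0) \<longlonglongrightarrow> (1/4 :: real))"
    using LIMSEQ_unique[OF tendsto_const] by fastforce
  show "\<exists>alphas y b R.
       sorted_wrt (<) alphas \<and> (\<forall>a \<in> set alphas. 0 < a \<and> a < 1) \<and>
       (\<forall>t. b t \<in> mono_cone (length alphas)) \<and>
       R > 0 \<and> (\<forall>t. \<forall>i < length alphas. \<bar>y t - b t ! i\<bar> < R) \<and>
       (\<exists>i < length alphas.
          \<not> ((\<lambda>T. (\<Sum>t<T. if y t \<le> qt_post m alphas eta th1 y b t ! i then 1 else 0) / real T)
               \<longlonglongrightarrow> alphas ! i))"
    using \<open>eta > 0\<close> bounded coverage_zero not_tendsto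
    by (intro exI[of _ "[1/4, 3/4]"] exI[of _ "\<lambda>_. 0"] exI[of _ b] exI[of _ R])
      (auto simp: b_def R_def adversarial_base_mono[unfolded numeral_2_eq_2])
qed

end
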